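(* Let $m\ge 2$, let $n_1,\dots,n_m\ge 3$ be odd, and let $\mathcal{C}=\mathcal{C}(C_{n_1},\dots,C_{n_m})$ be the odd chain cycle. Let $V_1=\{v^2_1,\dots,v^m_1\}$ and $V_2=V(\mathcal{C})\setminus V_1$ (so each vertex of $V_2$ has a unique name $v^i_j$ and lies in exactly one cycle $C_{n_i}$). Let $v^i_j,v^k_l\in V_2$ be distinct. (a) If $i=k$, then $v^i_j$ and $v^i_l$ are mutually maximally distant in $\mathcal{C}$ if and only if $d(v^i_j,v^i_l)=(n_i-1)/2$ (the diameter of $C_{n_i}$). (b) Suppose $i<k$. Then: (1) if $i=1$ and $k=m$: $v^1_j$ and $v^m_l$ are mutually maximally distant iff $j\in\{1,2\}$ and $l\in\{\frac{n_m+1}{2},\frac{n_m+1}{2}+1\}$; (2) if $i=1$ and $2\le k\le m-1$: $v^1_j$ and $v^k_l$ are mutually maximally distant iff $j\in\{1,2\}$ and $l=\frac{n_k+1}{2}$; (3) if $2\le i\le m-1$ and $k=m$: $v^i_j$ and $v^m_l$ are mutually maximally distant iff $j=2$ and $l\in\{\frac{n_m+1}{2},\frac{n_m+1}{2}+1\}$; (4) if $2\le i<k\le m-1$: $v^i_j$ and $v^k_l$ are mutually maximally distant iff $j=2$ and $l=\frac{n_k+1}{2}$.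
   Context: Let $C_{n_1},\dots,C_{n_m}$ be pairwise disjoint cycles, $V(C_{n_i})=\{v^i_1,\dots,v^i_{n_i}\}$ with $v^i_j$ adjacent to $v^i_{j+1}$ (indices mod $n_i$). The odd chain cycle $\mathcal{C}(C_{n_1},\dots,C_{n_m})$ (all $n_i$ odd) is obtained by identifying $v^i_{(n_i+1)/2+1}$ with $v^{i+1}_1$ for each $i=1,\dots,m-1$; the identified vertex carries both names. A vertex $u$ is maximally distant from $v$ if every neighbor $w$ of $u$ satisfies $d(v,w)\le d(u,v)$; $u,v$ are mutually maximally distant if each is maximally distant from the other. *)

theory Defs
  imports Main
begin

definition gdist :: "('a \<Rightarrow> 'a \<Rightarrow> bool) \<Rightarrow> 'a \<Rightarrow> 'a \<Rightarrow> nat" where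
  "gdist E u v = (LEAST k. (E ^^ k) u v)"

definition max_distant :: "('a \<Rightarrow> 'a \<Rightarrow> bool) \<Rightarrow> 'a \<Rightarrow> 'a \<Rightarrow> bool" where
  "max_distant E u v \<longleftrightarrow> (\<forall>w. E u w \<longrightarrow> gdist E v w \<le> gdist E u v)"

definition mutually_max_distant :: "('a \<Rightarrow> 'a \<Rightarrow> bool) \<Rightarrow> 'a \<Rightarrow> 'a \<Rightarrow> bool" where
  "mutually_max_distant E u v \<longleftrightarrow> max_distant E u v \<and> max_distant E v u"

text \<open>Vertex v^i_j is encoded as the pair (i,j), 1 \<le> i \<le> m, 1 \<le> j \<le> n i.
  The identified vertex v^i_{(n_i+1)/2+1} = v^{i+1}_1 is represented canonically by
  the pair (i, (n i + 1) div 2 + 1).\<close>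

definition canon :: "(nat \<Rightarrow> nat) \<Rightarrow> nat \<times> nat \<Rightarrow> nat \<times> nat" where
  "canon n p = (if 2 \<le> fst p \<and> snd p = 1
                then (fst p - 1, (n (fst p - 1) + 1) div 2 + 1) else p)"

definition chain_adj :: "nat \<Rightarrow> (nat \<Rightarrow> nat) \<Rightarrow> nat \<times> nat \<Rightarrow> nat \<times> nat \<Rightarrow> bool" where
  "chain_adj m n u v \<longleftrightarrow>
     (\<exists>i\<in>{1..m}. \<exists>j\<in>{1..n i}.
        (u = canon n (i, j) \<and> v = canon n (i, j mod n i + 1)) \<or>
        (v = canon n (i, j) \<and> u = canon n (i, j mod n i + 1)))"

text \<open>The vertices of V_2 (those with a unique name v^i_j).\<close>
definition in_V2 :: "nat \<Rightarrow> (nat \<Rightarrow> nat) \<Rightarrow> nat \<times> nat \<Rightarrow> bool" where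
  "in_V2 m n p \<longleftrightarrow> 1 \<le> fst p \<and> fst p \<le> m \<and> 1 \<le> snd p \<and> snd p \<le> n (fst p)
     \<and> \<not> (2 \<le> fst p \<and> snd p = 1)
     \<and> \<not> (fst p \<le> m - 1 \<and> snd p = (n (fst p) + 1) div 2 + 1)"

end

theory Submission
  imports Defs
begin

text \<open>
  Distances in the odd chain cycle have a closed form. A path from a vertex \<open>s\<close> into a cycle
  \<open>C\<^sub>i\<close> other than its own enters \<open>C\<^sub>i\<close> through one cut vertex, the gate: \<open>v\<^sup>i\<^sub>1\<close> if \<open>C\<^sub>i\<close> lies to
  the right of \<open>s\<close>, and the junction \<open>v\<^sup>i\<^sub>h\<close>, \<open>h = (n\<^sub>i + 1)/2 + 1\<close>, if it lies to the left.
  So the distance from \<open>s\<close> to \<open>v\<^sup>i\<^sub>j\<close> is the distance to the gate plus the distance from the gate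
  to \<open>v\<^sup>i\<^sub>j\<close> along \<open>C\<^sub>i\<close>; this is confirmed by walks of that length and by the formula changing
  by at most one along every edge.
  A vertex of \<open>V\<^sub>2\<close> has only its two cycle neighbours, so it is maximally distant from \<open>s\<close>
  exactly when it is a local maximum of the cycle distance from the gate, i.e. when it lies at
  distance \<open>(n\<^sub>i - 1)/2\<close> from the gate. Reading off these antipodes of \<open>v\<^sup>i\<^sub>h\<close> and of \<open>v\<^sup>k\<^sub>1\<close> gives
  all cases of the theorem.
\<close>

lemma relpowp_symp:
  assumes "symp R" and "(R ^^ d) x y"
  shows "(R ^^ d) y x"
  using assms(2)
proof (induction d arbitrary: y)
  case (Suc d)
  then obtain z where "(R ^^ d) x z" "R z y" by (blast elim: relpowp_Suc_E)
  from \<open>R z y\<close> have "R y z" using \<open>symp R\<close> by (blast dest: sympD)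
  moreover from \<open>(R ^^ d) x z\<close> have "(R ^^ d) z x" by (rule Suc.IH)
  ultimately show ?case by (rule relpowp_Suc_I2)
qed simp

lemma gdist_commute: "symp R \<Longrightarrow> gdist R x y = gdist R y x"
  unfolding gdist_def by (metis relpowp_symp)

lemma relpowp_bound_by_lipschitz:
  assumes "f x = 0" and "\<And>u v. R u v \<Longrightarrow> f v \<le> f u + 1" and "(R ^^ d) x y"
  shows "f y \<le> d"
  using assms(3)
proof (induction d arbitrary: y)
  case (Suc d)
  then obtain z where "(R ^^ d) x z" "R z y" by (blast elim: relpowp_Suc_E)
  with Suc.IH assms(2) show ?case by fastforce
qed (simp add: assms(1))

lemma gdist_eqI:
  assumes "(R ^^ f y) x y" and "f x = 0" and "\<And>u v. R u v \<Longrightarrow> f v \<le> f u + 1"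
  shows "gdist R x y = f y"
  unfolding gdist_def
  using assms by (blast intro: Least_equality relpowp_bound_by_lipschitz)

definition cycle_dist :: "nat \<Rightarrow> nat \<Rightarrow> nat \<Rightarrow> nat" where
  "cycle_dist N a b =
     min (if a \<le> b then b - a else a - b) (N - (if a \<le> b then b - a else a - b))"

definition cycle_offset :: "nat \<Rightarrow> nat \<Rightarrow> nat \<Rightarrow> nat" where
  "cycle_offset N a j = (if a \<le> j then j - a else j + N - a)"

lemma cycle_dist_commute: "cycle_dist N a b = cycle_dist N b a"
  unfolding cycle_dist_def by auto

lemma cycle_dist_self [simp]: "cycle_dist N a a = 0"
  unfolding cycle_dist_def by auto

lemma cycle_dist_eq_offset:
  assumes "1 \<le> a" "a \<le> N" "1 \<le> j" "j \<le> N"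
  shows "cycle_dist N a j = min (cycle_offset N a j) (N - cycle_offset N a j)"
proof (cases "a \<le> j")
  case False
  then have "N - (j + N - a) = a - j" "N - (a - j) = j + N - a" using assms by auto
  with False show ?thesis unfolding cycle_dist_def cycle_offset_def by (simp add: min.commute)
qed (simp add: cycle_dist_def cycle_offset_def)

lemma cycle_offset_less:
  "1 \<le> a \<Longrightarrow> a \<le> N \<Longrightarrow> 1 \<le> j \<Longrightarrow> j \<le> N \<Longrightarrow> cycle_offset N a j < N"
  unfolding cycle_offset_def by auto

lemma mod_add_one_eq_if:
  "1 \<le> (j::nat) \<Longrightarrow> j \<le> N \<Longrightarrow> j mod N + 1 = (if j = N then 1 else j + 1)"
  by (cases "j = N") auto

lemma cycle_offset_succ:
  assumes "1 \<le> a" "a \<le> N" "1 \<le> j" "j \<le> N"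
  shows "cycle_offset N a (j mod N + 1)
           = (if cycle_offset N a j = N - 1 then 0 else cycle_offset N a j + 1)"
  using assms unfolding mod_add_one_eq_if[OF assms(3,4)] cycle_offset_def
  by (cases "j = N"; cases "a \<le> j"; cases "a = j + 1"; simp; linarith?)

lemma cycle_offset_pred:
  assumes "1 \<le> a" "a \<le> N" "1 \<le> j" "j \<le> N"
  shows "cycle_offset N a (if j = 1 then N else j - 1)
           = (if cycle_offset N a j = 0 then N - 1 else cycle_offset N a j - 1)"
  using assms unfolding cycle_offset_def
  by (cases "j = 1"; cases "a \<le> j"; cases "a = j"; simp; linarith?)

lemma cycle_dist_succ_le:
  assumes "1 \<le> a" "a \<le> N" "1 \<le> j" "j \<le> N"
  shows "cycle_dist N a (j mod N + 1) \<le> cycle_dist N a j + 1"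
    and "cycle_dist N a j \<le> cycle_dist N a (j mod N + 1) + 1"
proof -
  define t where "t = cycle_offset N a j"
  have "t < N" unfolding t_def using cycle_offset_less[OF assms] .
  then have "min (if t = N - 1 then 0 else t + 1) (N - (if t = N - 1 then 0 else t + 1))
               \<le> min t (N - t) + 1
           \<and> min t (N - t)
               \<le> min (if t = N - 1 then 0 else t + 1) (N - (if t = N - 1 then 0 else t + 1)) + 1"
    by (cases "t = N - 1"; simp add: min_def; linarith?)
  moreover have "1 \<le> j mod N + 1" "j mod N + 1 \<le> N" using assms by (auto simp: Suc_le_eq)
  note succ = cycle_dist_eq_offset[OF assms(1,2) this]
  ultimately show "cycle_dist N a (j mod N + 1) \<le> cycle_dist N a j + 1"
    and "cycle_dist N a j \<le> cycle_dist N a (j mod N + 1) + 1"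
    unfolding cycle_dist_eq_offset[OF assms] succ cycle_offset_succ[OF assms] t_def
    by blast+
qed

lemma cycle_dist_local_max_iff:
  assumes "1 \<le> a" "a \<le> N" "1 \<le> j" "j \<le> N" "odd N"
  shows "(cycle_dist N a (j mod N + 1) \<le> cycle_dist N a j
          \<and> cycle_dist N a (if j = 1 then N else j - 1) \<le> cycle_dist N a j)
         \<longleftrightarrow> cycle_dist N a j = (N - 1) div 2"
proof -
  obtain q where q: "N = 2 * q + 1" using \<open>odd N\<close> by (blast elim: oddE)
  define t where "t = cycle_offset N a j"
  have "t < N" unfolding t_def using cycle_offset_less[OF assms(1-4)] .
  then have "(min (if t = N - 1 then 0 else t + 1) (N - (if t = N - 1 then 0 else t + 1))
                \<le> min t (N - t)
            \<and> min (if t = 0 then N - 1 else t - 1) (N - (if t = 0 then N - 1 else t - 1))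
                \<le> min t (N - t))
           \<longleftrightarrow> min t (N - t) = (N - 1) div 2"
    using q by (cases "t = 0"; cases "t = N - 1"; simp add: min_def; linarith?)
  moreover have "1 \<le> j mod N + 1" "j mod N + 1 \<le> N" using assms by (auto simp: Suc_le_eq)
  note succ = cycle_dist_eq_offset[OF assms(1,2) this]
  have "1 \<le> (if j = 1 then N else j - 1)" "(if j = 1 then N else j - 1) \<le> N"
    using assms by auto
  note pred = cycle_dist_eq_offset[OF assms(1,2) this]
  ultimately show ?thesis
    unfolding cycle_dist_eq_offset[OF assms(1-4)] succ pred
      cycle_offset_succ[OF assms(1-4)] cycle_offset_pred[OF assms(1-4)] t_def
    by blast
qed

abbreviation junction :: "nat \<Rightarrow> nat" where
  "junction N \<equiv> (N + 1) div 2 + 1"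

lemma junction_bounds:
  assumes "odd N" "N \<ge> 3"
  shows "2 \<le> junction N" "junction N \<le> N"
  using assms by (auto elim!: oddE)

lemma cycle_dist_junction_eq_radius_iff:
  assumes "1 \<le> j" "j \<le> N" "odd N"
  shows "cycle_dist N (junction N) j = (N - 1) div 2 \<longleftrightarrow> j \<in> {1, 2}"
proof -
  obtain q where "N = 2 * q + 1" using \<open>odd N\<close> by (blast elim: oddE)
  with assms(1,2) show ?thesis
    unfolding cycle_dist_def by (cases "q + 2 \<le> j"; simp add: min_def; linarith?)
qed

lemma cycle_dist_one_eq_radius_iff:
  assumes "1 \<le> j" "j \<le> N" "odd N"
  shows "cycle_dist N 1 j = (N - 1) div 2 \<longleftrightarrow> j \<in> {(N + 1) div 2, junction N}"
proof -
  obtain q where "N = 2 * q + 1" using \<open>odd N\<close> by (blast elim: oddE)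
  with assms(1,2) show ?thesis
    unfolding cycle_dist_def by (simp add: min_def; linarith?)
qed

definition radius_sum :: "(nat \<Rightarrow> nat) \<Rightarrow> nat \<Rightarrow> nat \<Rightarrow> nat" where
  "radius_sum n a b = (\<Sum>t = a..b. (n t - 1) div 2)"

lemma radius_sum_empty [simp]: "b < a \<Longrightarrow> radius_sum n a b = 0"
  unfolding radius_sum_def by simp

lemma radius_sum_snoc:
  "a \<le> Suc b \<Longrightarrow> radius_sum n a (Suc b) = radius_sum n a b + (n (Suc b) - 1) div 2"
  unfolding radius_sum_def by simp

lemma radius_sum_cons:
  "a \<le> b \<Longrightarrow> radius_sum n a b = (n a - 1) div 2 + radius_sum n (Suc a) b"
  unfolding radius_sum_def by (simp add: sum.atLeast_Suc_atMost)

text \<open>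
  Seen from the vertex \<open>(k, l)\<close>, the cycle \<open>i\<close> is entered at \<open>gate n k l i\<close>, which lies at
  distance \<open>gate_dist n k l i\<close> from \<open>(k, l)\<close>.
\<close>
definition gate :: "(nat \<Rightarrow> nat) \<Rightarrow> nat \<Rightarrow> nat \<Rightarrow> nat \<Rightarrow> nat" where
  "gate n k l i = (if i = k then l else if k < i then 1 else junction (n i))"

definition gate_dist :: "(nat \<Rightarrow> nat) \<Rightarrow> nat \<Rightarrow> nat \<Rightarrow> nat \<Rightarrow> nat" where
  "gate_dist n k l i =
     (if i = k then 0
      else if k < i then cycle_dist (n k) l (junction (n k)) + radius_sum n (k + 1) (i - 1)
      else cycle_dist (n k) l 1 + radius_sum n (i + 1) (k - 1))"

definition chain_dist :: "(nat \<Rightarrow> nat) \<Rightarrow> nat \<Rightarrow> nat \<Rightarrow> nat \<Rightarrow> nat \<Rightarrow> nat" where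
  "chain_dist n k l i j = gate_dist n k l i + cycle_dist (n i) (gate n k l i) j"

lemma canon_Pair:
  "canon n (i, j) = (if 2 \<le> i \<and> j = 1 then (i - 1, junction (n (i - 1))) else (i, j))"
  by (simp add: canon_def)

lemma chain_adjE:
  assumes "chain_adj m n x y"
  obtains i j where "1 \<le> i" "i \<le> m" "1 \<le> j" "j \<le> n i"
    "x = canon n (i, j) \<and> y = canon n (i, j mod n i + 1)
     \<or> y = canon n (i, j) \<and> x = canon n (i, j mod n i + 1)"
  using assms unfolding chain_adj_def by auto

lemma chain_adj_cycle_edge:
  "1 \<le> i \<Longrightarrow> i \<le> m \<Longrightarrow> 1 \<le> j \<Longrightarrow> j \<le> n i \<Longrightarrow>
   chain_adj m n (canon n (i, j)) (canon n (i, j mod n i + 1))"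
  unfolding chain_adj_def by fastforce

lemma symp_chain_adj: "symp (chain_adj m n)"
  unfolding chain_adj_def by (rule sympI) blast

lemma canon_in_V2: "in_V2 m n (i, j) \<Longrightarrow> canon n (i, j) = (i, j)"
  unfolding in_V2_def canon_def by auto

lemma canon_eq_in_V2:
  assumes "in_V2 m n (i, j)" "1 \<le> i'" "i' \<le> m" "(i, j) = canon n (i', j')"
  shows "i' = i \<and> j' = j"
  using assms unfolding in_V2_def canon_def by (auto split: if_splits)

locale chain_graph =
  fixes m :: nat and n :: "nat \<Rightarrow> nat"
begin

abbreviation adj :: "nat \<times> nat \<Rightarrow> nat \<times> nat \<Rightarrow> bool" where
  "adj \<equiv> chain_adj m n"

lemma walk_along_cycle:
  assumes "1 \<le> i" "i \<le> m" "1 \<le> a" "a \<le> n i"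
  shows "(adj ^^ d) (canon n (i, a)) (canon n (i, (a - 1 + d) mod n i + 1))"
proof (induction d)
  case 0
  show ?case using assms by simp
next
  case (Suc d)
  let ?j = "(a - 1 + d) mod n i + 1"
  have "1 \<le> ?j" "?j \<le> n i" using assms by (auto simp: Suc_le_eq)
  moreover have "?j mod n i + 1 = (a - 1 + Suc d) mod n i + 1" by (simp add: mod_Suc_eq)
  ultimately show ?case
    using relpowp_Suc_I[OF Suc.IH chain_adj_cycle_edge[OF assms(1,2)]] by simp
qed

lemma walk_cycle_dist:
  assumes "1 \<le> i" "i \<le> m" "1 \<le> a" "a \<le> n i" "1 \<le> b" "b \<le> n i"
  shows "(adj ^^ cycle_dist (n i) a b) (canon n (i, a)) (canon n (i, b))"
proof -
  have walk: "(adj ^^ cycle_dist (n i) a b) (canon n (i, a)) (canon n (i, b))"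
    if "1 \<le> a" "a \<le> b" "b \<le> n i" for a b
  proof (cases "b - a \<le> n i - (b - a)")
    case True
    then have "cycle_dist (n i) a b = b - a" using that unfolding cycle_dist_def by simp
    moreover have "(a - 1 + (b - a)) mod n i + 1 = b" using that by simp
    ultimately show ?thesis using walk_along_cycle[OF assms(1,2) that(1), of "b - a"] that by simp
  next
    case False
    \<comment> \<open>the shorter way from \<open>a\<close> to \<open>b\<close> is the reverse of the forward walk from \<open>b\<close> to \<open>a\<close>\<close>
    then have dist: "cycle_dist (n i) a b = n i - (b - a)" using that unfolding cycle_dist_def by simp
    have "b - 1 + (n i - (b - a)) = (a - 1) + n i" using that by linarith
    then have "(b - 1 + (n i - (b - a))) mod n i = (a - 1) mod n i" by (simp only: mod_add_self2)
    also have "\<dots> = a - 1" using that by (intro mod_less) linarith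
    finally have "(b - 1 + (n i - (b - a))) mod n i + 1 = a" using that by simp
    with dist show ?thesis
      using relpowp_symp[OF symp_chain_adj walk_along_cycle[OF assms(1,2), of b "n i - (b - a)"]] that
      by simp
  qed
  show ?thesis
  proof (cases "a \<le> b")
    case False
    then have "(adj ^^ cycle_dist (n i) b a) (canon n (i, b)) (canon n (i, a))"
      using walk[of b a] assms by simp
    then have "(adj ^^ cycle_dist (n i) b a) (canon n (i, a)) (canon n (i, b))"
      by (rule relpowp_symp[OF symp_chain_adj])
    then show ?thesis by (subst cycle_dist_commute)
  qed (use walk assms in simp)
qed

end

locale odd_chain = chain_graph +
  assumes odd_cycles: "\<forall>t\<in>{1..m}. odd (n t) \<and> n t \<ge> 3"
begin

lemma cycle_odd: "1 \<le> i \<Longrightarrow> i \<le> m \<Longrightarrow> odd (n i)"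
  and cycle_length_ge3: "1 \<le> i \<Longrightarrow> i \<le> m \<Longrightarrow> n i \<ge> 3"
  using odd_cycles by auto

lemma walk_junctions:
  assumes "1 \<le> i" "i + d \<le> m"
  shows "(adj ^^ radius_sum n i (i + d - 1)) (canon n (i, 1)) (canon n (i + d, 1))"
  using assms(2)
proof (induction d)
  case (Suc d)
  let ?i = "i + d"
  have odd: "odd (n ?i)" "n ?i \<ge> 3"
    using Suc.prems assms(1) cycle_odd cycle_length_ge3 by auto
  have "(adj ^^ cycle_dist (n ?i) 1 (junction (n ?i))) (canon n (?i, 1)) (canon n (?i, junction (n ?i)))"
    using walk_cycle_dist[of ?i 1 "junction (n ?i)"] junction_bounds[OF odd] Suc.prems assms(1)
    by simp
  moreover have "cycle_dist (n ?i) 1 (junction (n ?i)) = (n ?i - 1) div 2"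
    using cycle_dist_one_eq_radius_iff[of "junction (n ?i)"] junction_bounds[OF odd] odd by simp
  moreover have "canon n (?i, junction (n ?i)) = canon n (i + Suc d, 1)"
    using junction_bounds[OF odd] assms(1) by (simp add: canon_Pair)
  moreover have "radius_sum n i (i + Suc d - 1) = radius_sum n i (i + d - 1) + (n ?i - 1) div 2"
    using radius_sum_snoc[of i "i + d - 1" n] assms(1) by (cases d) simp_all
  ultimately show ?case using relpowp_trans[OF Suc.IH] Suc.prems by simp
qed (use assms(1) in simp)

lemma walk_chain_dist:
  assumes "1 \<le> k" "k \<le> m" "1 \<le> l" "l \<le> n k" "canon n (k, l) = (k, l)"
    and "1 \<le> i" "i \<le> m" "1 \<le> j" "j \<le> n i"
  shows "(adj ^^ chain_dist n k l i j) (k, l) (canon n (i, j))"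
proof -
  have odd_k: "odd (n k)" "n k \<ge> 3" and odd_i: "odd (n i)" "n i \<ge> 3"
    using assms cycle_odd cycle_length_ge3 by auto
  consider "i = k" | "k < i" | "i < k" by linarith
  then show ?thesis
  proof cases
    case 1
    then show ?thesis
      using walk_cycle_dist[of k l j] assms unfolding chain_dist_def gate_def gate_dist_def by simp
  next
    case 2
    have "(adj ^^ cycle_dist (n k) l (junction (n k))) (k, l) (canon n (k + 1, 1))"
      using walk_cycle_dist[of k l "junction (n k)"] assms junction_bounds[OF odd_k]
      by (simp add: canon_Pair)
    also have "(adj ^^ radius_sum n (k + 1) (i - 1)) (canon n (k + 1, 1)) (canon n (i, 1))"
      using walk_junctions[of "k + 1" "i - k - 1"] 2 assms by simp
    also have "(adj ^^ cycle_dist (n i) 1 j) (canon n (i, 1)) (canon n (i, j))"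
      using walk_cycle_dist[of i 1 j] assms odd_i by simp
    finally show ?thesis
      using 2 unfolding chain_dist_def gate_def gate_dist_def by simp
  next
    case 3
    have "(adj ^^ cycle_dist (n k) l 1) (k, l) (canon n (k, 1))"
      using walk_cycle_dist[of k l 1] assms odd_k by simp
    also have "(adj ^^ radius_sum n (i + 1) (k - 1)) (canon n (k, 1)) (canon n (i + 1, 1))"
      using relpowp_symp[OF symp_chain_adj walk_junctions[of "i + 1" "k - i - 1"]] 3 assms by simp
    also have "(adj ^^ cycle_dist (n i) (junction (n i)) j) (canon n (i + 1, 1)) (canon n (i, j))"
      using walk_cycle_dist[of i "junction (n i)" j] assms junction_bounds[OF odd_i]
      by (simp add: canon_Pair)
    finally show ?thesis
      using 3 unfolding chain_dist_def gate_def gate_dist_def by simp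
  qed
qed

lemma chain_dist_canon:
  assumes "1 \<le> i" "i \<le> m"
  shows "case_prod (chain_dist n k l) (canon n (i, j)) = chain_dist n k l i j"
proof (cases "2 \<le> i \<and> j = 1")
  case True
  then have j: "j = 1" and canon: "canon n (i, j) = (i - 1, junction (n (i - 1)))"
    by (simp_all add: canon_Pair)
  have odd: "odd (n (i - 1))" "n (i - 1) \<ge> 3" "odd (n i)" "n i \<ge> 3"
    using True assms cycle_odd cycle_length_ge3 by auto
  have half: "cycle_dist (n (i - 1)) 1 (junction (n (i - 1))) = (n (i - 1) - 1) div 2"
    "cycle_dist (n i) (junction (n i)) 1 = (n i - 1) div 2"
    using cycle_dist_one_eq_radius_iff[of "junction (n (i - 1))" "n (i - 1)"]
      cycle_dist_junction_eq_radius_iff[of 1 "n i"] junction_bounds[OF odd(1,2)] odd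
    by simp_all
  consider "k = i" | "k = i - 1" | "k < i - 1" | "i < k" using True by linarith
  then have "chain_dist n k l (i - 1) (junction (n (i - 1))) = chain_dist n k l i 1"
  proof cases
    case 3
    then have "radius_sum n (k + 1) (i - 1) = radius_sum n (k + 1) (i - 2) + (n (i - 1) - 1) div 2"
      using radius_sum_snoc[of "k + 1" "i - 2" n] by (simp add: Suc_diff_Suc numeral_2_eq_2)
    then show ?thesis using True 3 half
      unfolding chain_dist_def gate_def gate_dist_def by (auto simp: numeral_2_eq_2)
  next
    case 4
    then have "radius_sum n i (k - 1) = (n i - 1) div 2 + radius_sum n (i + 1) (k - 1)"
      using radius_sum_cons[of i "k - 1" n] by simp
    then show ?thesis using True 4 half
      unfolding chain_dist_def gate_def gate_dist_def by auto
  qed (use True in \<open>auto simp: chain_dist_def gate_def gate_dist_def\<close>)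
  then show ?thesis unfolding canon by (simp add: j)
qed (auto simp: canon_Pair)

lemma chain_dist_adj_le:
  assumes "1 \<le> k" "k \<le> m" "1 \<le> l" "l \<le> n k" and "adj x y"
  shows "case_prod (chain_dist n k l) y \<le> case_prod (chain_dist n k l) x + 1"
proof -
  obtain i j where ij: "1 \<le> i" "i \<le> m" "1 \<le> j" "j \<le> n i"
    and xy: "x = canon n (i, j) \<and> y = canon n (i, j mod n i + 1)
             \<or> y = canon n (i, j) \<and> x = canon n (i, j mod n i + 1)"
    using \<open>adj x y\<close> by (rule chain_adjE)
  have "1 \<le> gate n k l i" "gate n k l i \<le> n i"
    using assms ij junction_bounds[of "n i"] cycle_odd cycle_length_ge3 by (auto simp: gate_def)
  then have "chain_dist n k l i (j mod n i + 1) \<le> chain_dist n k l i j + 1"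
    "chain_dist n k l i j \<le> chain_dist n k l i (j mod n i + 1) + 1"
    using cycle_dist_succ_le[OF _ _ ij(3,4)] unfolding chain_dist_def by fastforce+
  then show ?thesis using xy chain_dist_canon[OF ij(1,2)] by auto
qed

lemma gdist_chain_dist:
  assumes "1 \<le> k" "k \<le> m" "1 \<le> l" "l \<le> n k" "canon n (k, l) = (k, l)"
    and "1 \<le> i" "i \<le> m" "1 \<le> j" "j \<le> n i"
  shows "gdist adj (k, l) (canon n (i, j)) = chain_dist n k l i j"
proof -
  have "gdist adj (k, l) (canon n (i, j)) = case_prod (chain_dist n k l) (canon n (i, j))"
  proof (rule gdist_eqI[where f = "case_prod (chain_dist n k l)"])
    show "(adj ^^ case_prod (chain_dist n k l) (canon n (i, j))) (k, l) (canon n (i, j))"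
      using walk_chain_dist[OF assms] chain_dist_canon[OF assms(6,7)] by simp
    show "case_prod (chain_dist n k l) (k, l) = 0"
      by (simp add: chain_dist_def gate_def gate_dist_def)
  qed (rule chain_dist_adj_le[OF assms(1-4)])
  then show ?thesis using chain_dist_canon[OF assms(6,7)] by simp
qed

lemma adj_in_V2_iff:
  assumes "in_V2 m n (i, j)"
  shows "adj (i, j) w \<longleftrightarrow>
           w = canon n (i, j mod n i + 1) \<or> w = canon n (i, if j = 1 then n i else j - 1)"
proof -
  let ?p = "if j = 1 then n i else j - 1"
  have ij: "1 \<le> i" "i \<le> m" "1 \<le> j" "j \<le> n i" using assms unfolding in_V2_def by auto
  have "n i \<ge> 3" using ij cycle_length_ge3 by simp
  then have p: "1 \<le> ?p" "?p \<le> n i" "?p mod n i + 1 = j" using ij by auto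
  have c: "canon n (i, j) = (i, j)" using canon_in_V2[OF assms] .
  show ?thesis
  proof
    assume "adj (i, j) w"
    then obtain i' j' where ij': "1 \<le> i'" "i' \<le> m" "1 \<le> j'" "j' \<le> n i'"
      and "(i, j) = canon n (i', j') \<and> w = canon n (i', j' mod n i' + 1)
           \<or> w = canon n (i', j') \<and> (i, j) = canon n (i', j' mod n i' + 1)"
      by (rule chain_adjE)
    then show "w = canon n (i, j mod n i + 1) \<or> w = canon n (i, ?p)"
    proof (elim disjE conjE)
      assume "w = canon n (i', j')" "(i, j) = canon n (i', j' mod n i' + 1)"
      with canon_eq_in_V2[OF assms ij'(1,2)] have "i' = i" "j' mod n i' + 1 = j" by blast+
      then have "j' = ?p" using ij' mod_add_one_eq_if[OF ij'(3,4)] by (auto split: if_splits)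
      with \<open>w = canon n (i', j')\<close> \<open>i' = i\<close> show ?thesis by simp
    qed (use canon_eq_in_V2[OF assms ij'(1,2)] in blast)
  next
    assume "w = canon n (i, j mod n i + 1) \<or> w = canon n (i, ?p)"
    then show "adj (i, j) w"
      using chain_adj_cycle_edge[where m = m and n = n, OF ij]
        chain_adj_cycle_edge[where m = m and n = n, OF ij(1,2) p(1,2)]
        symp_chain_adj c p(3) by (auto dest: sympD)
  qed
qed

lemma max_distant_iff:
  assumes u: "in_V2 m n (i, j)" and v: "in_V2 m n (k, l)"
  shows "max_distant adj (i, j) (k, l) \<longleftrightarrow> cycle_dist (n i) (gate n k l i) j = (n i - 1) div 2"
proof -
  let ?s = "j mod n i + 1" and ?p = "if j = 1 then n i else j - 1" and ?g = "gate n k l i"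
  have ij: "1 \<le> i" "i \<le> m" "1 \<le> j" "j \<le> n i" and kl: "1 \<le> k" "k \<le> m" "1 \<le> l" "l \<le> n k"
    using u v unfolding in_V2_def by auto
  have odd_i: "odd (n i)" "n i \<ge> 3" using ij cycle_odd cycle_length_ge3 by auto
  have sp: "1 \<le> ?s" "?s \<le> n i" "1 \<le> ?p" "?p \<le> n i" using ij odd_i by (auto simp: Suc_le_eq)
  have g: "1 \<le> ?g" "?g \<le> n i" using kl ij junction_bounds[OF odd_i] by (auto simp: gate_def)
  note dist = gdist_chain_dist[OF kl canon_in_V2[OF v] ij(1,2)]
  have "gdist adj (i, j) (k, l) = chain_dist n k l i j"
    using dist[OF ij(3,4)] gdist_commute[OF symp_chain_adj, where x = "(i, j)" and y = "(k, l)"]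
    unfolding canon_in_V2[OF u] by simp
  moreover have "max_distant adj (i, j) (k, l) \<longleftrightarrow>
               gdist adj (k, l) (canon n (i, ?s)) \<le> gdist adj (i, j) (k, l)
             \<and> gdist adj (k, l) (canon n (i, ?p)) \<le> gdist adj (i, j) (k, l)"
    unfolding max_distant_def adj_in_V2_iff[OF u] by blast
  ultimately have "max_distant adj (i, j) (k, l) \<longleftrightarrow>
               chain_dist n k l i ?s \<le> chain_dist n k l i j \<and> chain_dist n k l i ?p \<le> chain_dist n k l i j"
    by (simp only: dist[OF sp(1,2)] dist[OF sp(3,4)])
  also have "\<dots> \<longleftrightarrow>
               cycle_dist (n i) ?g ?s \<le> cycle_dist (n i) ?g j \<and> cycle_dist (n i) ?g ?p \<le> cycle_dist (n i) ?g j"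
    unfolding chain_dist_def by linarith
  also have "\<dots> \<longleftrightarrow> cycle_dist (n i) ?g j = (n i - 1) div 2"
    using cycle_dist_local_max_iff[OF g ij(3,4) odd_i(1)] .
  finally show ?thesis .
qed

lemma mutually_max_distant_same_cycle_iff:
  assumes u: "in_V2 m n (i, j)" and v: "in_V2 m n (i, l)"
  shows "mutually_max_distant adj (i, j) (i, l) \<longleftrightarrow> gdist adj (i, j) (i, l) = (n i - 1) div 2"
proof -
  have ij: "1 \<le> i" "i \<le> m" "1 \<le> j" "j \<le> n i" and l: "1 \<le> l" "l \<le> n i"
    using u v unfolding in_V2_def by auto
  have "gdist adj (i, j) (i, l) = cycle_dist (n i) j l"
    using gdist_chain_dist[OF ij canon_in_V2[OF u] ij(1,2) l] canon_in_V2[OF v]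
    by (simp add: chain_dist_def gate_def gate_dist_def)
  then show ?thesis
    unfolding mutually_max_distant_def max_distant_iff[OF u v] max_distant_iff[OF v u]
    by (simp add: gate_def cycle_dist_commute)
qed

lemma mutually_max_distant_different_cycles_iff:
  assumes u: "in_V2 m n (i, j)" and v: "in_V2 m n (k, l)" and "i < k"
  shows "mutually_max_distant adj (i, j) (k, l) \<longleftrightarrow>
           j \<in> {1, 2} \<and> l \<in> {(n k + 1) div 2, junction (n k)}"
proof -
  have ij: "1 \<le> i" "i \<le> m" "1 \<le> j" "j \<le> n i" and kl: "1 \<le> k" "k \<le> m" "1 \<le> l" "l \<le> n k"
    using u v unfolding in_V2_def by auto
  show ?thesis
    unfolding mutually_max_distant_def max_distant_iff[OF u v] max_distant_iff[OF v u]
    using \<open>i < k\<close> cycle_dist_junction_eq_radius_iff[OF ij(3,4) cycle_odd[OF ij(1,2)]]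
      cycle_dist_one_eq_radius_iff[OF kl(3,4) cycle_odd[OF kl(1,2)]]
    by (simp add: gate_def)
qed

end

theorem theorem3p6:
  fixes m :: nat and n :: "nat \<Rightarrow> nat" and i j k l :: nat
  assumes "m \<ge> 2"
    and "\<forall>t\<in>{1..m}. odd (n t) \<and> n t \<ge> 3"
    and "in_V2 m n (i, j)" and "in_V2 m n (k, l)"
    and "(i, j) \<noteq> (k, l)"
  shows "(i = k \<longrightarrow>
           (mutually_max_distant (chain_adj m n) (i, j) (i, l) \<longleftrightarrow>
            gdist (chain_adj m n) (i, j) (i, l) = (n i - 1) div 2))
       \<and> (i < k \<and> i = 1 \<and> k = m \<longrightarrow>
           (mutually_max_distant (chain_adj m n) (i, j) (k, l) \<longleftrightarrow>
            j \<in> {1, 2} \<and> l \<in> {(n m + 1) div 2, (n m + 1) div 2 + 1}))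
       \<and> (i < k \<and> i = 1 \<and> 2 \<le> k \<and> k \<le> m - 1 \<longrightarrow>
           (mutually_max_distant (chain_adj m n) (i, j) (k, l) \<longleftrightarrow>
            j \<in> {1, 2} \<and> l = (n k + 1) div 2))
       \<and> (i < k \<and> 2 \<le> i \<and> i \<le> m - 1 \<and> k = m \<longrightarrow>
           (mutually_max_distant (chain_adj m n) (i, j) (k, l) \<longleftrightarrow>
            j = 2 \<and> l \<in> {(n m + 1) div 2, (n m + 1) div 2 + 1}))
       \<and> (2 \<le> i \<and> i < k \<and> k \<le> m - 1 \<longrightarrow>
           (mutually_max_distant (chain_adj m n) (i, j) (k, l) \<longleftrightarrow>
            j = 2 \<and> l = (n k + 1) div 2))"
proof -
  interpret odd_chain m n using assms(2) by unfold_locales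
  note same = mutually_max_distant_same_cycle_iff[OF assms(3)]
  note different = mutually_max_distant_different_cycles_iff[OF assms(3,4)]
  \<comment> \<open>cut vertices are not in \<open>V\<^sub>2\<close>, which removes candidates in cases (2)--(4)\<close>
  have "2 \<le> i \<Longrightarrow> j \<noteq> 1" "k \<le> m - 1 \<Longrightarrow> l \<noteq> (n k + 1) div 2 + 1"
    using assms(3,4) unfolding in_V2_def by auto
  with same different assms(4) show ?thesis by auto
qed

end
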